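(* Let $d\geq 3$, $k\geq 1$ and $n=kd-2$. Then $\rho_n(d)(\Delta^2)$ acts on $A^n$ as multiplication by a scalar $\lambda\in A$ with $\lambda\neq 1$.
   Context: In the braid group $B_{n+1}$ with generators $s_1,\dots,s_n$, set $\Delta=(s_1s_2\cdots s_n)(s_1\cdots s_{n-1})\cdots(s_1s_2)(s_1)$. Then $\Delta^2$ is central in $B_{n+1}$. $A=\mathbb{Z}[q,q^{-1}]/(\Phi_d(q))$, where $\Phi_d$ is the $d$-th cyclotomic polynomial. $\rho_n(d):B_{n+1}\to GL_n(A)$ is the reduced Burau representation reduced mod $\Phi_d(q)$. It sends the generator $s_j$ to $T_j$, where $T_j(e_j)=-qe_j$, $T_j(e_{j-1})=e_{j-1}+qe_j$, $T_j(e_{j+1})=e_{j+1}+e_j$, and $T_j(e_k)=e_k$ for $|k-j|\geq 2$, with $e_1,\dots,e_n$ the standard basis. *)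

theory Defs
  imports "HOL-Analysis.Analysis" "HOL-Computational_Algebra.Polynomial"
    "Jordan_Normal_Form.Matrix"
begin

text \<open>The d-th cyclotomic polynomial: product of (X - z) over the primitive d-th roots
  of unity z = exp(2 pi i k/d), 0 <= k < d, gcd(k,d)=1; it has integer coefficients and
  we take the unique integer polynomial mapping to it.\<close>
definition cyclotomic_C :: "nat \<Rightarrow> complex poly" where
  "cyclotomic_C d = (\<Prod>k\<in>{k. k < d \<and> coprime k d}. [:- cis (2 * pi * real k / real d), 1:])"

definition cyclotomic :: "nat \<Rightarrow> int poly" where
  "cyclotomic d = (THE p. map_poly of_int p = cyclotomic_C d)"

text \<open>Matrix of the reduced Burau generator T_j (1-based j, basis e_1..e_n) over Z[q].
  Entry (r,c) (1-based) is the e_r-coefficient of T_j(e_c).\<close>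
definition burau_entry :: "nat \<Rightarrow> nat \<Rightarrow> nat \<Rightarrow> int poly" where
  "burau_entry j r c =
     (if c = j then (if r = j then [:0, -1:] else 0)
      else if c + 1 = j then (if r = c then 1 else if r = j then [:0, 1:] else 0)
      else if c = j + 1 then (if r = c then 1 else if r = j then 1 else 0)
      else (if r = c then 1 else 0))"

definition burau_T :: "nat \<Rightarrow> nat \<Rightarrow> int poly mat" where
  "burau_T n j = mat n n (\<lambda>(r, c). burau_entry j (r + 1) (c + 1))"

text \<open>Image of a positive braid word [j1,...,jm] (meaning s_j1 ... s_jm).\<close>
definition burau_word :: "nat \<Rightarrow> nat list \<Rightarrow> int poly mat" where
  "burau_word n w = foldr (\<lambda>j M. burau_T n j * M) w (1\<^sub>m n)"

text \<open>Delta = (s_1 ... s_n)(s_1 ... s_(n-1)) ... (s_1 s_2)(s_1).\<close>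
definition garside_word :: "nat \<Rightarrow> nat list" where
  "garside_word n = concat (map (\<lambda>m. [1..<m + 1]) (rev [1..<n + 1]))"

end

theory Submission
  imports Defs "Jordan_Normal_Form.Char_Poly"
begin

text \<open>The Burau matrix of \<Delta> is anti-diagonal with entry -q^(r+1) in row r (counting
  from 0); this is verified by multiplying in one generator at a time, tracking the partial
  products \<Delta>_m of the first m generators. Hence \<rho>_n(\<Delta>^2) = q^(n+1) I, already over \<int>[q].
  Modulo \<Phi>_d the scalar q^(n+1) = q^(kd-1) is not 1: evaluating at the primitive root
  \<zeta> = exp(2\<pi>i/d) would give \<zeta>^(kd-1) = 1 = \<zeta>^(kd), hence d | 1. Evaluating at \<zeta> requires
  that the integer polynomial cyclotomic d really maps to the complex product cyclotomic_C d;
  this follows by strong induction on d from X^d - 1 = \<Prod>_(e|d) \<Phi>_e, because a quotient by a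
  monic integer polynomial stays integral.\<close>

abbreviation burau_q :: "int poly" where "burau_q \<equiv> [:0, 1:]"

lemma burau_T_carrier: "burau_T n j \<in> carrier_mat n n"
  by (simp add: burau_T_def)

lemma burau_word_carrier: "burau_word n w \<in> carrier_mat n n"
  by (induction w) (auto simp: burau_word_def burau_T_def)

lemma burau_word_Cons: "burau_word n (j # w) = burau_T n j * burau_word n w"
  by (simp add: burau_word_def)

lemma burau_word_append: "burau_word n (v @ w) = burau_word n v * burau_word n w"
proof (induction v)
  case Nil
  show ?case using burau_word_carrier[of n w] by (simp add: burau_word_def)
next
  case (Cons j v)
  then show ?case
    using burau_T_carrier[of n j] burau_word_carrier[of n v] burau_word_carrier[of n w]
    by (simp add: burau_word_Cons assoc_mult_mat[of _ n n _ n _ n])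
qed

lemma index_burau_T_mult:
  assumes A: "A \<in> carrier_mat n n" and j: "1 \<le> j" "j \<le> n" and rc: "r < n" "c < n"
  shows "(burau_T n j * A) $$ (r, c) =
     (if r + 1 = j then (if 2 \<le> j then burau_q * A $$ (j - 2, c) else 0) - burau_q * A $$ (j - 1, c)
        + (if j < n then A $$ (j, c) else 0)
      else A $$ (r, c))"
proof -
  have entry: "(burau_T n j * A) $$ (r, c) = (\<Sum>k\<in>{0..<n}. burau_entry j (r + 1) (k + 1) * A $$ (k, c))"
    using A rc by (simp add: burau_T_def scalar_prod_def)
  show ?thesis
  proof (cases "r + 1 = j")
    case False
    have "(\<Sum>k\<in>{0..<n}. burau_entry j (r + 1) (k + 1) * A $$ (k, c))
        = (\<Sum>k\<in>{0..<n}. if k = r then A $$ (k, c) else 0)"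
      by (rule sum.cong) (use False in \<open>auto simp: burau_entry_def\<close>)
    then show ?thesis using entry False rc by simp
  next
    case True
    have "(\<Sum>k\<in>{0..<n}. burau_entry j (r + 1) (k + 1) * A $$ (k, c)) =
        (\<Sum>k\<in>{0..<n}. if k = j - 2 then (if 2 \<le> j then burau_q * A $$ (k, c) else 0) else 0)
      + (\<Sum>k\<in>{0..<n}. if k = j - 1 then - burau_q * A $$ (k, c) else 0)
      + (\<Sum>k\<in>{0..<n}. if k = j then A $$ (k, c) else 0)"
      unfolding sum.distrib[symmetric]
      by (rule sum.cong) (use True in \<open>auto simp: burau_entry_def\<close>)
    then show ?thesis using entry True rc j by auto
  qed
qed

text \<open>Entries of the Burau matrix of \<Delta>_m = (s_1\<cdots>s_m)(s_1\<cdots>s_(m-1))\<cdots>(s_1), for m \<le> n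
  (0-based indices).\<close>
definition garside_entry :: "nat \<Rightarrow> nat \<Rightarrow> nat \<Rightarrow> int poly" where
  "garside_entry m r c =
     (if r < m \<and> r + c + 1 = m then - (burau_q ^ (r + 1))
      else if c = m \<and> r \<le> m then 1
      else if m < c \<and> r = c then 1
      else 0)"

text \<open>Entries of (s_i\<cdots>s_m) \<Delta>_(m-1): rows above i - 1 are still those of \<Delta>_(m-1),
  the others are already those of \<Delta>_m.\<close>
definition garside_partial_entry :: "nat \<Rightarrow> nat \<Rightarrow> nat \<Rightarrow> nat \<Rightarrow> int poly" where
  "garside_partial_entry m i r c = (if r + 1 < i then garside_entry (m - 1) r c else garside_entry m r c)"

lemma garside_entry_upper:
  "r \<le> m \<Longrightarrow>
    garside_entry m r c = (if r + c + 1 = m then - (burau_q ^ (r + 1)) else if c = m then 1 else 0)"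
  by (auto simp: garside_entry_def)

lemma garside_entry_row_recurrence:
  assumes "r < m" "m \<le> n" "c < n"
  shows "(if 1 \<le> r then burau_q * garside_entry (m - 1) (r - 1) c else 0)
           - burau_q * garside_entry (m - 1) r c
           + (if r + 1 < n then garside_entry m (r + 1) c else 0)
         = garside_entry m r c"
proof -
  have upper:
    "garside_entry (m - 1) r c = (if r + c + 2 = m then - (burau_q ^ (r + 1)) else if c + 1 = m then 1 else 0)"
    "garside_entry m (r + 1) c = (if r + c + 2 = m then - (burau_q ^ (r + 2)) else if c = m then 1 else 0)"
    "garside_entry m r c = (if r + c + 1 = m then - (burau_q ^ (r + 1)) else if c = m then 1 else 0)"
    using assms by (auto simp: garside_entry_upper)
  show ?thesis
  proof (cases "r = 0")
    case True
    then show ?thesis using assms unfolding upper by (auto simp: one_pCons)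
  next
    case False
    have "garside_entry (m - 1) (r - 1) c
        = (if r + c + 1 = m then - (burau_q ^ r) else if c + 1 = m then 1 else 0)"
      using assms False by (auto simp: garside_entry_upper)
    then show ?thesis using assms False unfolding upper by (auto simp: power_Suc)
  qed
qed

lemma burau_T_mult_garside_partial:
  assumes "1 \<le> i" "i \<le> m" "m \<le> n"
  shows "burau_T n i * mat n n (\<lambda>(r, c). garside_partial_entry m (i + 1) r c)
       = mat n n (\<lambda>(r, c). garside_partial_entry m i r c)"
proof (rule eq_matI)
  fix r c assume "r < dim_row (mat n n (\<lambda>(r, c). garside_partial_entry m i r c))"
    "c < dim_col (mat n n (\<lambda>(r, c). garside_partial_entry m i r c))"
  then have rc: "r < n" "c < n" by auto
  show "(burau_T n i * mat n n (\<lambda>(r, c). garside_partial_entry m (i + 1) r c)) $$ (r, c)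
      = mat n n (\<lambda>(r, c). garside_partial_entry m i r c) $$ (r, c)"
  proof (cases "r + 1 = i")
    case False
    then show ?thesis using rc assms by (simp add: index_burau_T_mult garside_partial_entry_def)
  next
    case True
    have "(burau_T n i * mat n n (\<lambda>(r, c). garside_partial_entry m (i + 1) r c)) $$ (r, c) =
        (if 1 \<le> r then burau_q * garside_entry (m - 1) (r - 1) c else 0)
        - burau_q * garside_entry (m - 1) r c
        + (if r + 1 < n then garside_entry m (r + 1) c else 0)"
      using True rc assms
      by (cases "r = 0") (auto simp: index_burau_T_mult garside_partial_entry_def)
    also have "\<dots> = garside_entry m r c"
      using True rc assms by (intro garside_entry_row_recurrence) auto
    finally show ?thesis using True rc by (simp add: garside_partial_entry_def)
  qed
qed (auto simp: burau_T_def)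

lemma burau_word_upt_mult_garside:
  assumes "1 \<le> m" "m \<le> n" "1 \<le> i" "i \<le> m + 1"
  shows "burau_word n [i..<m + 1] * mat n n (\<lambda>(r, c). garside_entry (m - 1) r c)
       = mat n n (\<lambda>(r, c). garside_partial_entry m i r c)"
  using \<open>i \<le> m + 1\<close> \<open>1 \<le> i\<close>
proof (induction i rule: inc_induct)
  case base
  show ?case
    by (rule eq_matI)
      (use \<open>1 \<le> m\<close> in \<open>auto simp: burau_word_def garside_partial_entry_def garside_entry_def\<close>)
next
  case (step i)
  have "[i..<m + 1] = i # [Suc i..<m + 1]"
    using step.hyps by (simp add: upt_conv_Cons del: upt_Suc)
  then have "burau_word n [i..<m + 1] = burau_T n i * burau_word n [Suc i..<m + 1]"
    by (simp only: burau_word_Cons)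
  then have "burau_word n [i..<m + 1] * mat n n (\<lambda>(r, c). garside_entry (m - 1) r c)
      = burau_T n i * mat n n (\<lambda>(r, c). garside_partial_entry m (i + 1) r c)"
    using step burau_T_carrier[of n i] burau_word_carrier[of n "[Suc i..<m + 1]"]
    by (simp add: assoc_mult_mat[of _ n n _ n _ n])
  also have "\<dots> = mat n n (\<lambda>(r, c). garside_partial_entry m i r c)"
    using step assms by (intro burau_T_mult_garside_partial) auto
  finally show ?case .
qed

lemma burau_word_garside_word:
  "m \<le> n \<Longrightarrow> burau_word n (garside_word m) = mat n n (\<lambda>(r, c). garside_entry m r c)"
proof (induction m)
  case 0
  show ?case by (rule eq_matI) (auto simp: garside_word_def burau_word_def garside_entry_def)
next
  case (Suc m)
  have "garside_word (Suc m) = [1..<Suc m + 1] @ garside_word m"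
    by (simp add: garside_word_def)
  then have "burau_word n (garside_word (Suc m))
      = burau_word n [1..<Suc m + 1] * mat n n (\<lambda>(r, c). garside_entry m r c)"
    using Suc by (simp only: burau_word_append)
  also have "\<dots> = mat n n (\<lambda>(r, c). garside_partial_entry (Suc m) 1 r c)"
    using burau_word_upt_mult_garside[of "Suc m" n 1] Suc.prems by simp
  finally show ?case by (simp add: garside_partial_entry_def)
qed

lemma burau_word_garside_square:
  "burau_word n (garside_word n @ garside_word n) = burau_q ^ (n + 1) \<cdot>\<^sub>m 1\<^sub>m n"
proof (rule eq_matI)
  fix r c assume "r < dim_row (burau_q ^ (n + 1) \<cdot>\<^sub>m (1\<^sub>m n :: int poly mat))"
    "c < dim_col (burau_q ^ (n + 1) \<cdot>\<^sub>m (1\<^sub>m n :: int poly mat))"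
  then have rc: "r < n" "c < n" by auto
  have "burau_word n (garside_word n @ garside_word n) $$ (r, c)
      = (\<Sum>k\<in>{0..<n}. garside_entry n r k * garside_entry n k c)"
    using rc by (simp add: burau_word_append burau_word_garside_word scalar_prod_def)
  also have "\<dots> = (\<Sum>k\<in>{0..<n}. if k = n - 1 - r then - (burau_q ^ (r + 1)) * garside_entry n k c else 0)"
    by (rule sum.cong) (use rc in \<open>auto simp: garside_entry_upper\<close>)
  also have "\<dots> = (if r = c then burau_q ^ (r + 1) * burau_q ^ (n - 1 - r + 1) else 0)"
    using rc by (auto simp: garside_entry_upper)
  also have "\<dots> = (burau_q ^ (n + 1) \<cdot>\<^sub>m 1\<^sub>m n) $$ (r, c)"
  proof -
    have "r + 1 + (n - 1 - r + 1) = n + 1" using rc by simp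
    then show ?thesis using rc unfolding power_add[symmetric] by simp
  qed
  finally show "burau_word n (garside_word n @ garside_word n) $$ (r, c)
      = (burau_q ^ (n + 1) \<cdot>\<^sub>m 1\<^sub>m n) $$ (r, c)" .
qed (auto simp: burau_word_carrier[of n, THEN carrier_matD(1)] burau_word_carrier[of n, THEN carrier_matD(2)])

definition unity_root :: "nat \<Rightarrow> nat \<Rightarrow> complex" where
  "unity_root d k = cis (2 * pi * real k / real d)"

lemma cyclotomic_C_unity_root:
  "cyclotomic_C d = (\<Prod>k\<in>{k. k < d \<and> coprime k d}. [:- unity_root d k, 1:])"
  by (simp add: cyclotomic_C_def unity_root_def)

lemma unity_root_power: "unity_root d k ^ m = unity_root d (k * m)"
  unfolding unity_root_def Complex.DeMoivre by (simp add: mult_ac)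

lemma unity_root_eq_1_iff:
  assumes "0 < d"
  shows "unity_root d k = 1 \<longleftrightarrow> d dvd k"
proof -
  have "unity_root d k = exp (2 * of_real pi * \<i> * of_nat k / of_nat d)"
    by (simp add: unity_root_def cis_conv_exp field_simps)
  then show ?thesis using assms complex_root_unity_eq_1[of d k] by simp
qed

lemma unity_root_pow_eq_1: "0 < d \<Longrightarrow> unity_root d k ^ d = 1"
  by (simp add: unity_root_power unity_root_eq_1_iff)

lemma inj_on_unity_root: "0 < d \<Longrightarrow> inj_on (unity_root d) {..<d}"
  using Complex.bij_betw_roots_unity[of d] by (simp add: bij_betw_def unity_root_def[abs_def])

lemma X_pow_minus_one_eq_prod_unity_roots:
  assumes d: "0 < d"
  shows "monom 1 d - 1 = (\<Prod>k<d. [:- unity_root d k, 1:])"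
proof (rule poly_eqI_degree_lead_coeff[where n = d and A = "unity_root d ` {..<d}"])
  have deg: "degree (\<Prod>k<d. [:- unity_root d k, 1:]) = d"
    by (subst degree_prod_sum_eq) auto
  then show "degree (\<Prod>k<d. [:- unity_root d k, 1:]) \<le> d" by simp
  show "degree (monom 1 d - 1 :: complex poly) \<le> d"
    by (rule order.trans[OF degree_diff_le_max]) (simp add: degree_monom_le)
  show "coeff (monom 1 d - 1) d = coeff (\<Prod>k<d. [:- unity_root d k, 1:]) d"
    using d lead_coeff_prod[of "\<lambda>k. [:- unity_root d k, 1:]" "{..<d}"] deg by simp
  show "d \<le> card (unity_root d ` {..<d})"
    using inj_on_unity_root[OF d] by (simp add: card_image)
  fix z assume "z \<in> unity_root d ` {..<d}"
  then obtain k where k: "k < d" "z = unity_root d k" by auto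
  then show "poly (monom 1 d - 1) z = poly (\<Prod>k<d. [:- unity_root d k, 1:]) z"
    using unity_root_pow_eq_1[OF d] by (auto simp: poly_monom poly_prod intro!: bexI[of _ k])
qed

lemma unity_root_reduce:
  assumes "0 < d"
  shows "unity_root (d div gcd k d) (k div gcd k d) = unity_root d k"
proof -
  have "real (k div gcd k d) / real (d div gcd k d) = real k / real d"
    using assms by (simp add: real_of_nat_div)
  then show ?thesis
    unfolding unity_root_def by (simp only: times_divide_eq_right[symmetric])
qed

lemma bij_betw_reduced_fraction:
  fixes d :: nat
  assumes d: "0 < d"
  shows "bij_betw (\<lambda>k. (d div gcd k d, k div gcd k d)) {..<d}
           (SIGMA e:{e. e dvd d}. {j. j < e \<and> coprime j e})"
proof (rule bij_betw_byWitness[where f' = "\<lambda>(e, j). j * (d div e)"])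
  have reduce: "k div gcd k d * (d div (d div gcd k d)) = k \<and> d div gcd k d dvd d
      \<and> k div gcd k d < d div gcd k d \<and> coprime (k div gcd k d) (d div gcd k d)" if "k < d" for k
  proof -
    have dk: "d = gcd k d * (d div gcd k d)" "k = gcd k d * (k div gcd k d)"
      by simp_all
    have "d div (d div gcd k d) = gcd k d"
      using dk(1) d by (metis nonzero_mult_div_cancel_right mult_0_right neq0_conv)
    moreover have "k div gcd k d < d div gcd k d"
      using that dk by (metis mult_less_cancel1)
    moreover have "coprime (k div gcd k d) (d div gcd k d)"
      by (rule div_gcd_coprime) (use d in simp)
    ultimately show ?thesis using dk by (metis mult.commute dvd_triv_right)
  qed
  have expand: "d div gcd (j * (d div e)) d = e \<and> j * (d div e) div gcd (j * (d div e)) d = j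
      \<and> j * (d div e) < d" if "e dvd d" "j < e" "coprime j e" for e j
  proof -
    obtain m where m: "d = e * m" using \<open>e dvd d\<close> by blast
    then have "0 < m" "d div e = m" using d by auto
    moreover have "gcd (j * m) (e * m) = m"
      using \<open>coprime j e\<close> by (metis coprime_iff_gcd_eq_1 gcd_mult_distrib_nat mult.commute mult_1)
    ultimately show ?thesis using m \<open>j < e\<close> by simp
  qed
  show "\<forall>k\<in>{..<d}. (case (d div gcd k d, k div gcd k d) of (e, j) \<Rightarrow> j * (d div e)) = k"
    using reduce by simp
  show "\<forall>a\<in>SIGMA e:{e. e dvd d}. {j. j < e \<and> coprime j e}.
      (d div gcd (case a of (e, j) \<Rightarrow> j * (d div e)) d,
       (case a of (e, j) \<Rightarrow> j * (d div e)) div gcd (case a of (e, j) \<Rightarrow> j * (d div e)) d) = a"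
    using expand by auto
  show "(\<lambda>k. (d div gcd k d, k div gcd k d)) ` {..<d}
      \<subseteq> (SIGMA e:{e. e dvd d}. {j. j < e \<and> coprime j e})"
    using reduce by auto
  show "(\<lambda>(e, j). j * (d div e)) ` (SIGMA e:{e. e dvd d}. {j. j < e \<and> coprime j e}) \<subseteq> {..<d}"
    using expand by auto
qed

lemma X_pow_minus_one_eq_prod_cyclotomic_C:
  assumes d: "0 < d"
  shows "monom 1 d - 1 = (\<Prod>e | e dvd d. cyclotomic_C e)"
proof -
  let ?lin = "\<lambda>(e, j). [:- unity_root e j, 1:]"
  let ?S = "SIGMA e:{e. e dvd d}. {j. j < e \<and> coprime j e}"
  have "monom 1 d - 1 = (\<Prod>k<d. ?lin (d div gcd k d, k div gcd k d))"
    using d by (simp add: X_pow_minus_one_eq_prod_unity_roots unity_root_reduce)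
  also have "\<dots> = (\<Prod>x\<in>?S. ?lin x)"
    by (rule prod.reindex_bij_betw[OF bij_betw_reduced_fraction[OF d]])
  also have "\<dots> = (\<Prod>e | e dvd d. cyclotomic_C e)"
    using d by (simp add: prod.Sigma[symmetric] cyclotomic_C_unity_root)
  finally show ?thesis .
qed

lemma lead_coeff_cyclotomic_C: "lead_coeff (cyclotomic_C d) = 1"
  by (simp add: cyclotomic_C_def lead_coeff_prod)

lemma of_int_poly_quotient_monic:
  fixes P Q :: "int poly" and F :: "'a :: {field, ring_char_0} poly"
  assumes monic: "lead_coeff Q = 1" and factor: "map_poly of_int P = map_poly of_int Q * F"
  shows "\<exists>S. map_poly of_int S = F"
proof -
  have Q: "map_poly (of_int :: int \<Rightarrow> 'a) Q \<noteq> 0"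
    "lead_coeff (map_poly (of_int :: int \<Rightarrow> 'a) Q) = 1"
    using monic by auto
  have "map_prod (map_poly of_int) (map_poly of_int) (pseudo_divmod P Q)
      = pseudo_divmod (map_poly of_int P) (map_poly (of_int :: int \<Rightarrow> 'a) Q)"
    by (rule of_int_hom.pseudo_divmod_hom[symmetric])
  also have "\<dots> = (F, 0)"
    using Q by (simp add: pseudo_divmod_eq_div_mod factor)
  finally show ?thesis by (metis fst_map_prod fst_conv)
qed

lemma cyclotomic_C_integral: "0 < d \<Longrightarrow> \<exists>p. map_poly of_int p = cyclotomic_C d"
proof (induction d rule: less_induct)
  case (less d)
  let ?E = "{e. e dvd d \<and> e \<noteq> d}"
  have "\<exists>p. map_poly of_int p = cyclotomic_C e" if "e \<in> ?E" for e
  proof (rule less.IH)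
    show "0 < e" using that less.prems by (auto intro: dvd_pos_nat)
    then show "e < d" using that less.prems by (auto dest: dvd_imp_le)
  qed
  then obtain P where P: "\<And>e. e \<in> ?E \<Longrightarrow> map_poly of_int (P e) = cyclotomic_C e" by metis
  define Q where "Q = (\<Prod>e\<in>?E. P e)"
  have map_Q: "map_poly (of_int :: int \<Rightarrow> complex) Q = (\<Prod>e\<in>?E. cyclotomic_C e)"
    unfolding Q_def by (simp add: hom_distribs P)
  have "of_int (lead_coeff Q) = lead_coeff (map_poly (of_int :: int \<Rightarrow> complex) Q)" by simp
  also have "\<dots> = 1" by (simp add: map_Q lead_coeff_prod lead_coeff_cyclotomic_C)
  finally have "lead_coeff Q = 1" by simp
  moreover have "map_poly (of_int :: int \<Rightarrow> complex) (monom 1 d - 1) = map_poly of_int Q * cyclotomic_C d"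
  proof -
    have "{e. e dvd d} = insert d ?E" by auto
    then have "monom 1 d - 1 = (\<Prod>e\<in>insert d ?E. cyclotomic_C e)"
      using X_pow_minus_one_eq_prod_cyclotomic_C[OF less.prems] by simp
    also have "\<dots> = cyclotomic_C d * (\<Prod>e\<in>?E. cyclotomic_C e)"
      using less.prems by (intro prod.insert) auto
    finally show ?thesis by (simp add: map_Q hom_distribs mult.commute)
  qed
  ultimately show ?case by (rule of_int_poly_quotient_monic)
qed

lemma map_poly_of_int_cyclotomic: "0 < d \<Longrightarrow> map_poly of_int (cyclotomic d) = cyclotomic_C d"
proof -
  assume "0 < d"
  then obtain p where p: "map_poly (of_int :: int \<Rightarrow> complex) p = cyclotomic_C d"
    using cyclotomic_C_integral by blast
  have "cyclotomic d = p"
    unfolding cyclotomic_def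
  proof (rule the_equality)
    fix p' assume "map_poly of_int p' = cyclotomic_C d"
    then have "map_poly (of_int :: int \<Rightarrow> complex) p' = map_poly of_int p" using p by simp
    then show "p' = p" by simp
  qed (fact p)
  then show ?thesis using p by simp
qed

lemma cyclotomic_dvd_X_pow_minus_one_imp_dvd:
  assumes d: "1 < d" and dvd: "cyclotomic d dvd [:0, 1:] ^ N - 1"
  shows "d dvd N"
proof -
  obtain s where s: "[:0, 1:] ^ N - 1 = cyclotomic d * s" using dvd by blast
  have "[:0, 1:] ^ N - 1 = cyclotomic_C d * map_poly of_int s"
    using arg_cong[OF s, of "map_poly (of_int :: int \<Rightarrow> complex)"] d
    by (simp add: hom_distribs map_poly_of_int_cyclotomic)
  moreover have "poly (cyclotomic_C d) (unity_root d 1) = 0"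
    using d by (auto simp: cyclotomic_C_unity_root poly_prod intro!: bexI[of _ 1])
  ultimately have "poly ([:0, 1:] ^ N - 1) (unity_root d 1) = 0" by simp
  then have "unity_root d 1 ^ N = 1" by simp
  then show ?thesis using d by (simp add: unity_root_power unity_root_eq_1_iff)
qed

theorem lemma4p5:
  fixes d k n :: nat
  assumes "d \<ge> 3" and "k \<ge> 1" and "n = k * d - 2"
  shows "\<exists>c0 :: int poly.
           (\<forall>r < n. \<forall>c < n.
              cyclotomic d dvd
                (burau_word n (garside_word n @ garside_word n) $$ (r, c)
                 - (if r = c then c0 else 0)))
         \<and> \<not> cyclotomic d dvd (c0 - 1)"
proof (intro exI[of _ "burau_q ^ (n + 1)"] conjI allI impI)
  fix r c assume "r < n" "c < n"
  then show "cyclotomic d dvd (burau_word n (garside_word n @ garside_word n) $$ (r, c)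
      - (if r = c then burau_q ^ (n + 1) else 0))"
    by (simp add: burau_word_garside_square)
next
  show "\<not> cyclotomic d dvd (burau_q ^ (n + 1) - 1)"
  proof
    assume "cyclotomic d dvd burau_q ^ (n + 1) - 1"
    then have "d dvd n + 1" using assms(1) by (intro cyclotomic_dvd_X_pow_minus_one_imp_dvd) auto
    moreover have "k * d = (n + 1) + 1" using assms mult_le_mono[of 1 k 3 d] by simp
    ultimately have "d dvd 1" by (metis dvd_add_right_iff dvd_triv_right)
    then show False using assms(1) by simp
  qed
qed

end
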